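(* Let $\mathcal{M}=(S,A,\rho_0,\mathbb{P},c,\gamma)$ be an MDP and let $\pi$ be a policy with CPT-Q function $Q^\pi_{cpt}$ and CPT-V function $V^\pi_{cpt}$. Let $\pi'$ be a policy that differs from $\pi$ at step $t$ and is identical (in distribution) to $\pi$ at all subsequent steps. If $$\sum_{a_t\in A} \pi'(a_t\mid s_t)\,Q^\pi_{cpt}(s_t,a_t) \le V^\pi_{cpt}(s_t)\quad\text{for all } s_t\in S,$$ then $\pi'$ is improved compared to $\pi$, i.e. $V^{\pi'}_{cpt}(s)\le V^\pi_{cpt}(s)$ for all $s\in S$.
   Context: An MDP is a tuple $(S,A,\rho_0,\mathbb{P},c,\gamma)$ with finite state set $S$, finite action set $A$, initial distribution $\rho_0$, transition probabilities $\mathbb{P}(s'\mid s,a)$, cost $c(s,a)$ (a random variable with $|c|<\infty$) incurred when action $a$ is taken in state $s$, and discount factor $\gamma\in(0,1]$. A policy $\pi(\cdot\mid s)$ is a probability distribution over $A$ for each $s$. CPT-value: given utility functions $u^+,u^-:\mathbb{R}\to\mathbb{R}_{\ge0}$ that are continuous with bounded first moment, with $u^+(x)=0$ for $x\le0$ and $u^+$ non-decreasing otherwise, $u^-(x)=0$ for $x\ge0$ and $u^-$ non-increasing otherwise, and weighting functions $w^+,w^-:[0,1]\to[0,1]$ Lipschitz continuous, non-decreasing, with $w^\pm(0)=0$, $w^\pm(1)=1$, the CPT-value of a random variable $Y$ is $$\rho_{cpt}(Y)=\int_0^\infty w^+(\mathbb{P}(u^+(Y)>z))\,dz-\int_0^\infty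 w^-(\mathbb{P}(u^-(Y)>z))\,dz.$$ The CPT-Q function of $\pi$ is defined by $$Q^\pi_{cpt}(s,a)=\rho_{cpt}\Big(c(s,a)+\gamma\sum_{s'}\mathbb{P}(s'\mid s,a)\sum_{a'}\pi(a'\mid s')Q^\pi_{cpt}(s',a')\Big),$$ and the CPT-V function by $V^\pi_{cpt}(s)=\sum_a\pi(a\mid s)Q^\pi_{cpt}(s,a)$; equivalently $V^\pi_{cpt}(s_t)=\rho_{cpt}\big(c(s_t,a^\pi_t)+\gamma\sum_{s_{t+1}}\mathbb{P}(s_{t+1}\mid s_t,a^\pi_t)V^\pi_{cpt}(s_{t+1})\big)$ where $a^\pi_t$ is the action chosen by $\pi$. For the policy $\pi'$ that uses $\pi'$ at step $t$ and $\pi$ afterwards, its CPT-V at step $t$ is $V^{\pi'}_{cpt}(s_t)=\sum_{a_t}\pi'(a_t\mid s_t)\rho_{cpt}\big(c(s_t,a_t)+\gamma\sum_{s_{t+1}}\mathbb{P}(s_{t+1}\mid s_t,a_t)V^{\pi'}_{cpt}(s_{t+1})\big)$ with the continuation values those of $\pi$. A policy $\pi'$ is improved compared to $\pi$ iff $V^{\pi'}_{cpt}(s)\le V^\pi_{cpt}(s)$ for all $s\in S$. *)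

theory Defs
  imports "HOL-Probability.Probability"
begin

definition cpt_utility_pos :: "(real \<Rightarrow> real) \<Rightarrow> bool" where
  "cpt_utility_pos u \<longleftrightarrow> continuous_on UNIV u \<and> (\<forall>x. 0 \<le> u x)
      \<and> (\<forall>x. x \<le> 0 \<longrightarrow> u x = 0) \<and> mono_on {0..} u"

definition cpt_utility_neg :: "(real \<Rightarrow> real) \<Rightarrow> bool" where
  "cpt_utility_neg u \<longleftrightarrow> continuous_on UNIV u \<and> (\<forall>x. 0 \<le> u x)
      \<and> (\<forall>x. 0 \<le> x \<longrightarrow> u x = 0) \<and> antimono_on {..0} u"

definition cpt_weight :: "(real \<Rightarrow> real) \<Rightarrow> bool" where
  "cpt_weight w \<longleftrightarrow> (\<exists>L. L-lipschitz_on {0..1} w) \<and> mono_on {0..1} w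
      \<and> (\<forall>p\<in>{0..1}. w p \<in> {0..1}) \<and> w 0 = 0 \<and> w 1 = 1"

definition cpt_value :: "'w measure \<Rightarrow> (real \<Rightarrow> real) \<Rightarrow> (real \<Rightarrow> real)
    \<Rightarrow> (real \<Rightarrow> real) \<Rightarrow> (real \<Rightarrow> real) \<Rightarrow> ('w \<Rightarrow> real) \<Rightarrow> real" where
  "cpt_value M up um wp wm Y =
     (LINT z:{0..}|lborel. wp (measure M {\<omega> \<in> space M. up (Y \<omega>) > z}))
   - (LINT z:{0..}|lborel. wm (measure M {\<omega> \<in> space M. um (Y \<omega>) > z}))"

definition is_policy :: "('s \<Rightarrow> 'a::finite \<Rightarrow> real) \<Rightarrow> bool" where
  "is_policy \<pi> \<longleftrightarrow> (\<forall>s a. 0 \<le> \<pi> s a) \<and> (\<forall>s. (\<Sum>a\<in>UNIV. \<pi> s a) = 1)"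

definition is_mdp :: "'w measure \<Rightarrow> ('s::finite \<Rightarrow> real) \<Rightarrow> ('s \<Rightarrow> 'a::finite \<Rightarrow> 's \<Rightarrow> real)
    \<Rightarrow> ('s \<Rightarrow> 'a \<Rightarrow> 'w \<Rightarrow> real) \<Rightarrow> real \<Rightarrow> bool" where
  "is_mdp M \<rho>0 P c \<gamma> \<longleftrightarrow> prob_space M
     \<and> (\<forall>s. 0 \<le> \<rho>0 s) \<and> (\<Sum>s\<in>UNIV. \<rho>0 s) = 1
     \<and> (\<forall>s a s'. 0 \<le> P s a s') \<and> (\<forall>s a. (\<Sum>s'\<in>UNIV. P s a s') = 1)
     \<and> (\<forall>s a. c s a \<in> borel_measurable M)
     \<and> 0 < \<gamma> \<and> \<gamma> \<le> 1"

definition is_cpt_Q :: "'w measure \<Rightarrow> (real \<Rightarrow> real) \<Rightarrow> (real \<Rightarrow> real) \<Rightarrow> (real \<Rightarrow> real)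
    \<Rightarrow> (real \<Rightarrow> real) \<Rightarrow> ('s::finite \<Rightarrow> 'a::finite \<Rightarrow> 's \<Rightarrow> real) \<Rightarrow> ('s \<Rightarrow> 'a \<Rightarrow> 'w \<Rightarrow> real)
    \<Rightarrow> real \<Rightarrow> ('s \<Rightarrow> 'a \<Rightarrow> real) \<Rightarrow> ('s \<Rightarrow> 'a \<Rightarrow> real) \<Rightarrow> bool" where
  "is_cpt_Q M up um wp wm P c \<gamma> \<pi> Q \<longleftrightarrow>
     (\<forall>s a. Q s a = cpt_value M up um wp wm
        (\<lambda>\<omega>. c s a \<omega> + \<gamma> * (\<Sum>s'\<in>UNIV. P s a s' * (\<Sum>a'\<in>UNIV. \<pi> s' a' * Q s' a'))))"

definition cpt_V :: "('s \<Rightarrow> 'a::finite \<Rightarrow> real) \<Rightarrow> ('s \<Rightarrow> 'a \<Rightarrow> real) \<Rightarrow> 's \<Rightarrow> real" where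
  "cpt_V \<pi> Q s = (\<Sum>a\<in>UNIV. \<pi> s a * Q s a)"

(* CPT-V at step t of the policy using pi' at step t and then the policy with CPT-V function V *)
definition cpt_V_step :: "'w measure \<Rightarrow> (real \<Rightarrow> real) \<Rightarrow> (real \<Rightarrow> real) \<Rightarrow> (real \<Rightarrow> real)
    \<Rightarrow> (real \<Rightarrow> real) \<Rightarrow> ('s::finite \<Rightarrow> 'a::finite \<Rightarrow> 's \<Rightarrow> real) \<Rightarrow> ('s \<Rightarrow> 'a \<Rightarrow> 'w \<Rightarrow> real)
    \<Rightarrow> real \<Rightarrow> ('s \<Rightarrow> 'a \<Rightarrow> real) \<Rightarrow> ('s \<Rightarrow> real) \<Rightarrow> 's \<Rightarrow> real" where
  "cpt_V_step M up um wp wm P c \<gamma> \<pi>' V s =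
     (\<Sum>a\<in>UNIV. \<pi>' s a * cpt_value M up um wp wm
        (\<lambda>\<omega>. c s a \<omega> + \<gamma> * (\<Sum>s'\<in>UNIV. P s a s' * V s')))"

end

theory Submission
  imports Defs
begin

lemma cpt_V_step_cpt_V_eq:
  assumes "is_cpt_Q M up um wp wm P c \<gamma> \<pi> Q"
  shows "cpt_V_step M up um wp wm P c \<gamma> \<pi>' (cpt_V \<pi> Q) s = (\<Sum>a\<in>UNIV. \<pi>' s a * Q s a)"
proof -
  have "\<And>a. cpt_value M up um wp wm
      (\<lambda>\<omega>. c s a \<omega> + \<gamma> * (\<Sum>s'\<in>UNIV. P s a s' * cpt_V \<pi> Q s')) = Q s a"
    using assms unfolding is_cpt_Q_def cpt_V_def by (metis (no_types))
  then show ?thesis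
    unfolding cpt_V_step_def by (simp only:)
qed

theorem proposition1:
  fixes M :: "'w measure"
    and \<rho>0 :: "'s::finite \<Rightarrow> real"
    and P :: "'s \<Rightarrow> 'a::finite \<Rightarrow> 's \<Rightarrow> real"
    and c :: "'s \<Rightarrow> 'a \<Rightarrow> 'w \<Rightarrow> real"
    and \<gamma> :: real
    and up um wp wm :: "real \<Rightarrow> real"
    and \<pi> \<pi>' :: "'s \<Rightarrow> 'a \<Rightarrow> real"
    and Q :: "'s \<Rightarrow> 'a \<Rightarrow> real"
  assumes "is_mdp M \<rho>0 P c \<gamma>"
    and "cpt_utility_pos up" and "cpt_utility_neg um"
    and "cpt_weight wp" and "cpt_weight wm"
    and "is_policy \<pi>" and "is_policy \<pi>'"
    and "is_cpt_Q M up um wp wm P c \<gamma> \<pi> Q"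
    and "\<forall>s. (\<Sum>a\<in>UNIV. \<pi>' s a * Q s a) \<le> cpt_V \<pi> Q s"
  shows "\<forall>s. cpt_V_step M up um wp wm P c \<gamma> \<pi>' (cpt_V \<pi> Q) s \<le> cpt_V \<pi> Q s"
  \<comment> \<open>Only the fixed-point equation of Q and the improvement hypothesis are needed: since
    the continuation after step t is that of \<pi>, each CPT-value in the one-step value of \<pi>'
    is literally Q s a.\<close>
  using cpt_V_step_cpt_V_eq[OF assms(8)] assms(9) by simp

end
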